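(* Let $G,K,L,N_r\ge1$. For each $g\in\{1,\dots,G\}$ let $R_g\ge L$, let $\mathbf U_g\in\mathbb C^{N_r\times R_g}$ have orthonormal columns, let $\boldsymbol\Lambda_g\in\mathbb R^{R_g\times R_g}$ be diagonal with positive diagonal entries, and assume $\mathbf U_g^H\mathbf U_{g'}=\mathbf 0$ for all $g\neq g'$ (disjoint clusters). For $k\in\{1,\dots,K\}$ let $\mathbf W_{g,k}\in\mathbb C^{R_g\times L}$ and $\mathbf H_{g,k}=\mathbf U_g\boldsymbol\Lambda_g^{1/2}\mathbf W_{g,k}$. For $\mathbf A\in\mathbb C^{L\times N_r}$ define $$f(\mathbf A)=\mathrm{tr}(\mathbf A\mathbf A^H)\,\max_{g,k}\mathrm{tr}\big((\mathbf A\mathbf H_{g,k}\mathbf H_{g,k}^H\mathbf A^H)^{-1}\big),$$ with $f(\mathbf A)=+\infty$ if some $\mathbf A\mathbf H_{g,k}\mathbf H_{g,k}^H\mathbf A^H$ is singular. Then for every $\mathbf A\in\mathbb C^{L\times N_r}$ there exist matrices $\mathbf C_g\in\mathbb C^{R_g\times L}$, $g=1,\dots,G$, such that $\mathbf A'=\sum_{g=1}^G\mathbf C_g^H\mathbf U_g^H$ satisfies $f(\mathbf A')\le f(\mathbf A)$. In particular, if $\min_{\mathbf A}f(\mathbf A)$ is attained, then it is attained by a matrix of the form $\sum_{g=1}^G\mathbf C_g^H\mathbf U_g^H$ with $\mathbf C_g\in\mathbb C^{R_g\times L}$.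
   Context: $(\cdot)^H$ denotes conjugate transpose; $\mathrm{tr}$ is the trace. The minimization of $f$ over $\mathbf A$ is the aggregation-beamforming design problem (P2). *)

theory Defs
  imports "Jordan_Normal_Form.Schur_Decomposition" "Jordan_Normal_Form.Gauss_Jordan_Elimination"
    "HOL-Library.Extended_Real"
begin

abbreviation cH :: "complex mat \<Rightarrow> complex mat" where
  "cH M \<equiv> mat_adjoint M"

definition mtrace :: "complex mat \<Rightarrow> complex" where
  "mtrace M = (\<Sum>i<dim_row M. M $$ (i, i))"

definition diag_sqrt :: "real mat \<Rightarrow> complex mat" where
  "diag_sqrt D = mat (dim_row D) (dim_col D)
     (\<lambda>(i, j). if i = j then complex_of_real (sqrt (D $$ (i, i))) else 0)"

definition chan :: "(nat \<Rightarrow> complex mat) \<Rightarrow> (nat \<Rightarrow> real mat) \<Rightarrow> (nat \<Rightarrow> nat \<Rightarrow> complex mat)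
    \<Rightarrow> nat \<Rightarrow> nat \<Rightarrow> complex mat" where
  "chan U Lam W g k = U g * diag_sqrt (Lam g) * W g k"

definition tr_inv :: "complex mat \<Rightarrow> ereal" where
  "tr_inv M = (case mat_inverse M of Some B \<Rightarrow> ereal (Re (mtrace B)) | None \<Rightarrow> \<infinity>)"

text \<open>Objective f(A) of problem (P2); indices g in {0..<G}, k in {0..<K}.\<close>
definition fobj :: "nat \<Rightarrow> nat \<Rightarrow> (nat \<Rightarrow> nat \<Rightarrow> complex mat) \<Rightarrow> complex mat \<Rightarrow> ereal" where
  "fobj G K H A =
     (if \<exists>g<G. \<exists>k<K. \<not> invertible_mat (A * H g k * cH (H g k) * cH A) then \<infinity>
      else ereal (Re (mtrace (A * cH A))) *
           Max {tr_inv (A * H g k * cH (H g k) * cH A) | g k. g < G \<and> k < K})"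

fun msum :: "nat \<Rightarrow> nat \<Rightarrow> (nat \<Rightarrow> complex mat) \<Rightarrow> nat \<Rightarrow> complex mat" where
  "msum m n F 0 = 0\<^sub>m m n"
| "msum m n F (Suc G) = msum m n F G + F G"

end

theory Submission
  imports Defs
begin

text \<open>
  The matrix \<open>P = \<Sum>\<^sub>g U\<^sub>g U\<^sub>g\<^sup>H\<close> is the orthogonal projection onto the span of the
  mutually orthogonal cluster subspaces, so it fixes every channel \<open>H\<^sub>g\<^sub>,\<^sub>k = U\<^sub>g \<Lambda>\<^sub>g\<^sup>1\<^sup>/\<^sup>2 W\<^sub>g\<^sub>,\<^sub>k\<close>.
  Hence \<open>A' = A P = \<Sum>\<^sub>g (A U\<^sub>g) U\<^sub>g\<^sup>H\<close> has \<open>A' H\<^sub>g\<^sub>,\<^sub>k = A H\<^sub>g\<^sub>,\<^sub>k\<close>, so the maximal trace of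
  the inverses is unchanged, while splitting \<open>A = A P + A (I - P)\<close> gives
  \<open>tr (A A\<^sup>H) = tr (A' A'\<^sup>H) + tr (A (I - P) (A (I - P))\<^sup>H) \<ge> tr (A' A'\<^sup>H)\<close>.
  Both factors of \<open>f\<close> being nonnegative, \<open>f(A') \<le> f(A)\<close>.
\<close>

lemma dim_cH [simp]: "dim_row (cH A) = dim_col A" "dim_col (cH A) = dim_row A"
  by (auto simp: mat_adjoint_def)

lemma cH_carrier_mat [simp]: "A \<in> carrier_mat n m \<Longrightarrow> cH A \<in> carrier_mat m n"
  unfolding carrier_mat_def by simp

lemma index_cH [simp]: "i < dim_col A \<Longrightarrow> j < dim_row A \<Longrightarrow> cH A $$ (i, j) = cnj (A $$ (j, i))"
  by (simp add: mat_adjoint_def mat_of_rows_index)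

lemma gram_carrier_mat: "B \<in> carrier_mat n m \<Longrightarrow> B * cH B \<in> carrier_mat n n"
  by (simp add: mult_carrier_mat[of _ n m])

lemma cH_cH [simp]: "cH (cH A) = A"
  by (rule eq_matI) auto

lemma cH_mult: "A \<in> carrier_mat n m \<Longrightarrow> B \<in> carrier_mat m p \<Longrightarrow> cH (A * B) = cH B * cH A"
  by (rule eq_matI) (auto simp: scalar_prod_def intro!: sum.cong)

lemma cH_one [simp]: "cH (1\<^sub>m n) = 1\<^sub>m n"
  by (rule eq_matI) auto

lemma cH_zero [simp]: "cH (0\<^sub>m n m) = 0\<^sub>m m n"
  by (rule eq_matI) auto

lemma cH_add: "A \<in> carrier_mat n m \<Longrightarrow> B \<in> carrier_mat n m \<Longrightarrow> cH (A + B) = cH A + cH B"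
  by (rule eq_matI) auto

lemma cH_minus: "A \<in> carrier_mat n m \<Longrightarrow> B \<in> carrier_mat n m \<Longrightarrow> cH (A - B) = cH A - cH B"
  by (rule eq_matI) auto

lemma mtrace_add: "A \<in> carrier_mat n n \<Longrightarrow> B \<in> carrier_mat n n \<Longrightarrow> mtrace (A + B) = mtrace A + mtrace B"
  unfolding mtrace_def by (auto simp: sum.distrib)

lemma mtrace_gram_nonneg:
  assumes "B \<in> carrier_mat n m"
  shows "Re (mtrace (B * cH B)) \<ge> 0"
proof -
  have "Re (mtrace (B * cH B)) = (\<Sum>i<n. \<Sum>k=0..<m. (Re (B $$ (i, k)))\<^sup>2 + (Im (B $$ (i, k)))\<^sup>2)"
    using assms unfolding mtrace_def
    by (auto simp: scalar_prod_def complex_mult_cnj intro!: sum.cong)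
  also have "\<dots> \<ge> 0" by (intro sum_nonneg) auto
  finally show ?thesis .
qed

lemma complement_projection:
  assumes P: "P \<in> carrier_mat n n" and hP: "cH P = P" and iP: "P * P = P"
  shows "cH (1\<^sub>m n - P) = 1\<^sub>m n - P" and "(1\<^sub>m n - P) * (1\<^sub>m n - P) = 1\<^sub>m n - P"
proof -
  show "cH (1\<^sub>m n - P) = 1\<^sub>m n - P"
    using P hP by (simp add: cH_minus[of _ n n])
  have Q: "1\<^sub>m n - P \<in> carrier_mat n n" using P by (rule minus_carrier_mat)
  have "P * (1\<^sub>m n - P) = P * 1\<^sub>m n - P * P"
    using P by (intro mult_minus_distrib_mat) auto
  also have "\<dots> = 0\<^sub>m n n" using P iP by simp
  finally have "P * (1\<^sub>m n - P) = 0\<^sub>m n n" .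
  moreover have "(1\<^sub>m n - P) * (1\<^sub>m n - P) = 1\<^sub>m n * (1\<^sub>m n - P) - P * (1\<^sub>m n - P)"
    using P Q by (intro minus_mult_distrib_mat) auto
  moreover have "(1\<^sub>m n - P) - 0\<^sub>m n n = 1\<^sub>m n - P" by (rule eq_matI) (use P in auto)
  ultimately show "(1\<^sub>m n - P) * (1\<^sub>m n - P) = 1\<^sub>m n - P" using left_mult_one_mat[OF Q] by simp
qed

lemma gram_mult_projection:
  assumes P: "P \<in> carrier_mat n n" and hP: "cH P = P" and iP: "P * P = P" and A: "A \<in> carrier_mat m n"
  shows "(A * P) * cH (A * P) = A * P * cH A"
proof -
  have "(A * P) * cH (A * P) = A * P * (P * cH A)"
    using A P hP by (simp add: cH_mult)
  also have "\<dots> = A * (P * P) * cH A"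
    using A P by (simp add: assoc_mult_mat[of _ m n _ n _ m] assoc_mult_mat[of _ n n _ n _ m])
  finally show ?thesis using iP by simp
qed

lemma mtrace_gram_mult_projection_le:
  assumes P: "P \<in> carrier_mat n n" and hP: "cH P = P" and iP: "P * P = P"
    and A: "A \<in> carrier_mat m n"
  shows "Re (mtrace ((A * P) * cH (A * P))) \<le> Re (mtrace (A * cH A))"
proof -
  define Q where "Q = 1\<^sub>m n - P"
  have Q: "Q \<in> carrier_mat n n" unfolding Q_def using P by (rule minus_carrier_mat)
  have hQ: "cH Q = Q" and iQ: "Q * Q = Q"
    unfolding Q_def using complement_projection[OF P hP iP] by auto
  have "P + Q = 1\<^sub>m n" unfolding Q_def by (rule eq_matI) (use P in auto)
  then have "A * cH A = A * (P + Q) * cH A" using A by simp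
  also have "\<dots> = A * P * cH A + A * Q * cH A"
    using A P Q mult_add_distrib_mat[OF A P Q]
      add_mult_distrib_mat[OF mult_carrier_mat[OF A P] mult_carrier_mat[OF A Q] cH_carrier_mat[OF A]]
    by simp
  also have "\<dots> = (A * P) * cH (A * P) + (A * Q) * cH (A * Q)"
    using gram_mult_projection[OF P hP iP A] gram_mult_projection[OF Q hQ iQ A] by simp
  finally have "mtrace (A * cH A) = mtrace ((A * P) * cH (A * P)) + mtrace ((A * Q) * cH (A * Q))"
    using mtrace_add[OF gram_carrier_mat[OF mult_carrier_mat[OF A P]] gram_carrier_mat[OF mult_carrier_mat[OF A Q]]]
    by simp
  moreover have "Re (mtrace ((A * Q) * cH (A * Q))) \<ge> 0"
    using A Q by (intro mtrace_gram_nonneg[of _ m n]) simp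
  ultimately show ?thesis by simp
qed

lemma tr_inv_gram_nonneg:
  assumes B: "B \<in> carrier_mat n n"
  shows "tr_inv (B * cH B) \<ge> 0"
proof (cases "mat_inverse (B * cH B)")
  case None
  then show ?thesis by (simp add: tr_inv_def)
next
  case (Some Y)
  from mat_inverse(2)[OF gram_carrier_mat[OF B] Some]
  have BY: "B * cH B * Y = 1\<^sub>m n" and Y: "Y \<in> carrier_mat n n" by blast+
  define C where "C = cH B * Y"
  have C: "C \<in> carrier_mat n n" unfolding C_def using B Y by (simp add: mult_carrier_mat[of _ n n])
  have BC: "B * C = 1\<^sub>m n" unfolding C_def using BY assoc_mult_mat[OF B cH_carrier_mat[OF B] Y] by simp
  have CB: "C * B = 1\<^sub>m n" by (rule mat_mult_left_right_inverse[OF B C BC])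
  \<comment> \<open>\<open>(B B\<^sup>H)\<^sup>-\<^sup>1 = (B\<^sup>-\<^sup>1)\<^sup>H B\<^sup>-\<^sup>1\<close> is again a Gram matrix\<close>
  have "cH C * C * (B * cH B) = cH C * (C * B) * cH B"
    using B C by (simp add: assoc_mult_mat[of _ n n _ n _ n])
  also have "\<dots> = 1\<^sub>m n" using B C CB BC by (simp flip: cH_mult)
  finally have "Y = cH C * C * (B * cH B) * Y" using Y by simp
  also have "\<dots> = cH C * C * (B * cH B * Y)"
    using B C Y by (intro assoc_mult_mat[of _ n n _ n _ n]) (auto intro: gram_carrier_mat)
  also have "\<dots> = cH C * C" using C by (simp add: BY)
  finally have "Y = cH C * cH (cH C)" by simp
  then have "Re (mtrace Y) \<ge> 0" using mtrace_gram_nonneg[of "cH C" n n] C by simp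
  then show ?thesis using Some by (simp add: tr_inv_def)
qed

lemma gram_mult: "A \<in> carrier_mat l r \<Longrightarrow> H \<in> carrier_mat r l \<Longrightarrow>
    A * H * cH H * cH A = (A * H) * cH (A * H)"
  by (simp add: cH_mult assoc_mult_mat[of _ l l _ r _ l])

lemma fobj_le_if_same_products:
  assumes "G \<ge> 1" and "K \<ge> 1"
    and A: "A \<in> carrier_mat L Nr" and A': "A' \<in> carrier_mat L Nr"
    and H: "\<And>g k. g < G \<Longrightarrow> k < K \<Longrightarrow> H g k \<in> carrier_mat Nr L"
    and same_products: "\<And>g k. g < G \<Longrightarrow> k < K \<Longrightarrow> A' * H g k = A * H g k"
    and trace_le: "Re (mtrace (A' * cH A')) \<le> Re (mtrace (A * cH A))"
  shows "fobj G K H A' \<le> fobj G K H A"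
proof -
  have same_gram: "A' * H g k * cH (H g k) * cH A' = A * H g k * cH (H g k) * cH A"
    if "g < G" "k < K" for g k
    using gram_mult[OF A' H] gram_mult[OF A H] same_products that by simp
  define S where "S = {tr_inv (A * H g k * cH (H g k) * cH A) | g k. g < G \<and> k < K}"
  have S': "{tr_inv (A' * H g k * cH (H g k) * cH A') | g k. g < G \<and> k < K} = S"
    unfolding S_def by (metis (no_types, lifting) same_gram)
  have "finite S" unfolding S_def by (rule finite_image_set2) auto
  moreover have "tr_inv (A * H 0 0 * cH (H 0 0) * cH A) \<in> S"
    unfolding S_def using assms(1,2) by force
  moreover have "tr_inv (A * H 0 0 * cH (H 0 0) * cH A) \<ge> 0"
    using gram_mult[OF A H] tr_inv_gram_nonneg[of "A * H 0 0" L] A H assms(1,2) by simp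
  ultimately have "Max S \<ge> 0" using Max_ge order.trans by blast
  moreover have "Re (mtrace (A' * cH A')) \<ge> 0" using A' by (rule mtrace_gram_nonneg)
  moreover have "(\<exists>g<G. \<exists>k<K. \<not> invertible_mat (A' * H g k * cH (H g k) * cH A')) \<longleftrightarrow>
      (\<exists>g<G. \<exists>k<K. \<not> invertible_mat (A * H g k * cH (H g k) * cH A))"
    by (metis same_gram)
  ultimately show ?thesis
    unfolding fobj_def S' S_def[symmetric] using trace_le by (auto intro: ereal_mult_right_mono)
qed

lemma msum_carrier_mat: "(\<And>g. g < n \<Longrightarrow> F g \<in> carrier_mat m p) \<Longrightarrow> msum m p F n \<in> carrier_mat m p"
  by (induction n) auto

lemma msum_cong: "(\<And>g. g < n \<Longrightarrow> F g = F' g) \<Longrightarrow> msum m p F n = msum m p F' n"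
  by (induction n) auto

lemma msum_single:
  assumes "g0 < n" and "F g0 \<in> carrier_mat m p" and "\<And>g. g < n \<Longrightarrow> g \<noteq> g0 \<Longrightarrow> F g = 0\<^sub>m m p"
  shows "msum m p F n = F g0"
proof -
  have "msum m p F n' = (if g0 < n' then F g0 else 0\<^sub>m m p)" if "n' \<le> n" for n'
    using that by (induction n') (use assms in \<open>auto simp: less_Suc_eq\<close>)
  then show ?thesis using assms(1) by simp
qed

lemma msum_mult_left:
  assumes A: "A \<in> carrier_mat m q" and F: "\<And>g. g < n \<Longrightarrow> F g \<in> carrier_mat q p"
  shows "msum m p (\<lambda>g. A * F g) n = A * msum q p F n"
  using F
proof (induction n)
  case (Suc n)
  have "msum q p F n \<in> carrier_mat q p" using Suc.prems by (intro msum_carrier_mat) auto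
  with Suc A show ?case by (simp add: mult_add_distrib_mat)
qed (use A in simp)

lemma msum_mult_right:
  assumes B: "B \<in> carrier_mat q p" and F: "\<And>g. g < n \<Longrightarrow> F g \<in> carrier_mat m q"
  shows "msum m p (\<lambda>g. F g * B) n = msum m q F n * B"
  using F
proof (induction n)
  case (Suc n)
  have "msum m q F n \<in> carrier_mat m q" using Suc.prems by (intro msum_carrier_mat) auto
  with Suc B show ?case by (simp add: add_mult_distrib_mat)
qed (use B in simp)

lemma cH_msum:
  assumes "\<And>g. g < n \<Longrightarrow> F g \<in> carrier_mat m p"
  shows "cH (msum m p F n) = msum p m (\<lambda>g. cH (F g)) n"
  using assms
proof (induction n)
  case (Suc n)
  have "msum m p F n \<in> carrier_mat m p" using Suc.prems by (intro msum_carrier_mat) auto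
  with Suc show ?case by (simp add: cH_add)
qed simp

definition span_projection :: "nat \<Rightarrow> (nat \<Rightarrow> complex mat) \<Rightarrow> nat \<Rightarrow> complex mat" where
  "span_projection n U G = msum n n (\<lambda>g. U g * cH (U g)) G"

lemma span_projection_carrier_mat:
  assumes "\<And>g. g < G \<Longrightarrow> U g \<in> carrier_mat n (R g)"
  shows "span_projection n U G \<in> carrier_mat n n"
  unfolding span_projection_def using assms
  by (intro msum_carrier_mat) (auto intro: gram_carrier_mat)

lemma span_projection_hermitian:
  assumes U: "\<And>g. g < G \<Longrightarrow> U g \<in> carrier_mat n (R g)"
  shows "cH (span_projection n U G) = span_projection n U G"
proof -
  have "cH (span_projection n U G) = msum n n (\<lambda>g. cH (U g * cH (U g))) G"
    unfolding span_projection_def using U by (intro cH_msum) (auto intro: gram_carrier_mat)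
  also have "\<dots> = span_projection n U G"
    unfolding span_projection_def
    by (rule msum_cong) (use cH_mult[OF U cH_carrier_mat[OF U]] in simp)
  finally show ?thesis .
qed

lemma span_projection_fixes:
  assumes U: "\<And>g. g < G \<Longrightarrow> U g \<in> carrier_mat n (R g)"
    and orthonormal: "\<And>g. g < G \<Longrightarrow> cH (U g) * U g = 1\<^sub>m (R g)"
    and orthogonal: "\<And>g g'. g < G \<Longrightarrow> g' < G \<Longrightarrow> g \<noteq> g' \<Longrightarrow> cH (U g) * U g' = 0\<^sub>m (R g) (R g')"
    and g: "g < G"
  shows "span_projection n U G * U g = U g"
proof -
  have "span_projection n U G * U g = msum n (R g) (\<lambda>g'. U g' * cH (U g') * U g) G"
    unfolding span_projection_def using U[OF g] U
    by (intro msum_mult_right[symmetric]) (auto intro: gram_carrier_mat)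
  also have "\<dots> = U g * cH (U g) * U g"
  proof (rule msum_single[OF g])
    fix g' assume "g' < G" "g' \<noteq> g"
    then show "U g' * cH (U g') * U g = 0\<^sub>m n (R g)"
      using U[OF g] U[OF \<open>g' < G\<close>] orthogonal[OF \<open>g' < G\<close> g]
      by (simp add: assoc_mult_mat[of _ n "R g'" _ n _ "R g"])
  qed (use U[OF g] in \<open>simp add: mult_carrier_mat[of _ n n]\<close>)
  also have "\<dots> = U g"
    using U[OF g] orthonormal[OF g] by (simp add: assoc_mult_mat[of _ n "R g" _ n _ "R g"])
  finally show ?thesis .
qed

lemma span_projection_idempotent:
  assumes U: "\<And>g. g < G \<Longrightarrow> U g \<in> carrier_mat n (R g)"
    and orthonormal: "\<And>g. g < G \<Longrightarrow> cH (U g) * U g = 1\<^sub>m (R g)"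
    and orthogonal: "\<And>g g'. g < G \<Longrightarrow> g' < G \<Longrightarrow> g \<noteq> g' \<Longrightarrow> cH (U g) * U g' = 0\<^sub>m (R g) (R g')"
  shows "span_projection n U G * span_projection n U G = span_projection n U G"
proof -
  let ?P = "span_projection n U G"
  have P: "?P \<in> carrier_mat n n" using U by (rule span_projection_carrier_mat)
  have "msum n n (\<lambda>g. ?P * (U g * cH (U g))) G = ?P * msum n n (\<lambda>g. U g * cH (U g)) G"
    using P U by (intro msum_mult_left) (auto intro: gram_carrier_mat)
  then have "?P * ?P = msum n n (\<lambda>g. ?P * (U g * cH (U g))) G"
    by (simp only: span_projection_def[of n U G, symmetric])
  also have "\<dots> = msum n n (\<lambda>g. U g * cH (U g)) G"
  proof (rule msum_cong)
    fix g assume g: "g < G"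
    have "?P * (U g * cH (U g)) = ?P * U g * cH (U g)"
      using P U[OF g] by (simp add: assoc_mult_mat[of _ n n _ "R g" _ n])
    then show "?P * (U g * cH (U g)) = U g * cH (U g)"
      using span_projection_fixes[where R = R, OF U orthonormal orthogonal g] by simp
  qed
  finally show ?thesis by (simp only: span_projection_def)
qed

lemma fobj_le_cluster_form:
  assumes "G \<ge> 1" and "K \<ge> 1" and A: "A \<in> carrier_mat L Nr"
    and U: "\<And>g. g < G \<Longrightarrow> U g \<in> carrier_mat Nr (R g)"
    and orthonormal: "\<And>g. g < G \<Longrightarrow> cH (U g) * U g = 1\<^sub>m (R g)"
    and orthogonal: "\<And>g g'. g < G \<Longrightarrow> g' < G \<Longrightarrow> g \<noteq> g' \<Longrightarrow> cH (U g) * U g' = 0\<^sub>m (R g) (R g')"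
    and H: "\<And>g k. g < G \<Longrightarrow> k < K \<Longrightarrow> H g k = U g * Y g k"
    and Y: "\<And>g k. g < G \<Longrightarrow> k < K \<Longrightarrow> Y g k \<in> carrier_mat (R g) L"
  shows "\<exists>C. (\<forall>g<G. C g \<in> carrier_mat (R g) L) \<and>
           fobj G K H (msum L Nr (\<lambda>g. cH (C g) * cH (U g)) G) \<le> fobj G K H A"
proof (intro exI conjI allI impI)
  define P where "P = span_projection Nr U G"
  have P: "P \<in> carrier_mat Nr Nr" "cH P = P" "P * P = P"
    unfolding P_def
    using span_projection_carrier_mat[where R = R, OF U] span_projection_hermitian[where R = R, OF U]
      span_projection_idempotent[where R = R, OF U orthonormal orthogonal]
    by blast+
  have fixes_U: "P * U g = U g" if "g < G" for g
    unfolding P_def by (rule span_projection_fixes[where R = R, OF U orthonormal orthogonal that])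
  define C where "C g = cH (A * U g)" for g
  show "C g \<in> carrier_mat (R g) L" if "g < G" for g
    unfolding C_def using A U[OF that] by (simp add: mult_carrier_mat[of _ L Nr])
  have "msum L Nr (\<lambda>g. cH (C g) * cH (U g)) G = msum L Nr (\<lambda>g. A * (U g * cH (U g))) G"
    unfolding C_def using A U by (intro msum_cong) (simp add: assoc_mult_mat[OF A U cH_carrier_mat[OF U]])
  also have "\<dots> = A * P"
    unfolding P_def span_projection_def using A U by (intro msum_mult_left) (auto intro: gram_carrier_mat)
  finally have A': "msum L Nr (\<lambda>g. cH (C g) * cH (U g)) G = A * P" .
  have "fobj G K H (A * P) \<le> fobj G K H A"
  proof (rule fobj_le_if_same_products[OF assms(1,2) A])
    show "A * P \<in> carrier_mat L Nr" using A P(1) by simp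
    show "H g k \<in> carrier_mat Nr L" if "g < G" "k < K" for g k
      using H[OF that] U[OF that(1)] Y[OF that] by simp
    show "A * P * H g k = A * H g k" if "g < G" "k < K" for g k
      using H[OF that] U[OF that(1)] Y[OF that] A P(1) fixes_U[OF that(1)]
      by (simp add: assoc_mult_mat[of A L Nr P Nr _ L] flip: assoc_mult_mat[of P Nr Nr _ "R g" _ L])
    show "Re (mtrace (A * P * cH (A * P))) \<le> Re (mtrace (A * cH A))"
      using P A by (rule mtrace_gram_mult_projection_le)
  qed
  then show "fobj G K H (msum L Nr (\<lambda>g. cH (C g) * cH (U g)) G) \<le> fobj G K H A"
    unfolding A' .
qed

lemma diag_sqrt_carrier_mat: "D \<in> carrier_mat n m \<Longrightarrow> diag_sqrt D \<in> carrier_mat n m"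
  unfolding diag_sqrt_def carrier_mat_def by simp

lemma chan_cluster_form:
  assumes "U g \<in> carrier_mat Nr (R g)" and "Lam g \<in> carrier_mat (R g) (R g)"
    and "W g k \<in> carrier_mat (R g) L"
  shows "chan U Lam W g k = U g * (diag_sqrt (Lam g) * W g k)"
  unfolding chan_def using assms diag_sqrt_carrier_mat by (blast intro: assoc_mult_mat)

theorem proposition1:
  fixes G K L Nr :: nat
    and R :: "nat \<Rightarrow> nat"
    and U :: "nat \<Rightarrow> complex mat"
    and Lam :: "nat \<Rightarrow> real mat"
    and W :: "nat \<Rightarrow> nat \<Rightarrow> complex mat"
  assumes "G \<ge> 1" "K \<ge> 1" "L \<ge> 1" "Nr \<ge> 1"
    and "\<And>g. g < G \<Longrightarrow> R g \<ge> L"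
    and "\<And>g. g < G \<Longrightarrow> U g \<in> carrier_mat Nr (R g)"
    and "\<And>g. g < G \<Longrightarrow> cH (U g) * U g = 1\<^sub>m (R g)"
    and "\<And>g. g < G \<Longrightarrow> Lam g \<in> carrier_mat (R g) (R g)"
    and "\<And>g. g < G \<Longrightarrow> diagonal_mat (Lam g)"
    and "\<And>g i. g < G \<Longrightarrow> i < R g \<Longrightarrow> Lam g $$ (i, i) > 0"
    and "\<And>g g'. g < G \<Longrightarrow> g' < G \<Longrightarrow> g \<noteq> g' \<Longrightarrow> cH (U g) * U g' = 0\<^sub>m (R g) (R g')"
    and "\<And>g k. g < G \<Longrightarrow> k < K \<Longrightarrow> W g k \<in> carrier_mat (R g) L"
  shows "(\<forall>A \<in> carrier_mat L Nr. \<exists>C. (\<forall>g<G. C g \<in> carrier_mat (R g) L) \<and>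
            fobj G K (chan U Lam W) (msum L Nr (\<lambda>g. cH (C g) * cH (U g)) G)
              \<le> fobj G K (chan U Lam W) A)
       \<and> ((\<exists>A0 \<in> carrier_mat L Nr. \<forall>A \<in> carrier_mat L Nr.
              fobj G K (chan U Lam W) A0 \<le> fobj G K (chan U Lam W) A)
          \<longrightarrow> (\<exists>C. (\<forall>g<G. C g \<in> carrier_mat (R g) L) \<and>
                (\<forall>A \<in> carrier_mat L Nr.
                   fobj G K (chan U Lam W) (msum L Nr (\<lambda>g. cH (C g) * cH (U g)) G)
                     \<le> fobj G K (chan U Lam W) A)))"
  (is "(\<forall>A \<in> ?M. ?improved A) \<and> _")
proof -
  have improved: "?improved A" if "A \<in> ?M" for A
  proof (rule fobj_le_cluster_form[where R = R, OF assms(1,2) that assms(6,7,11)])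
    fix g k assume gk: "g < G" "k < K"
    show "chan U Lam W g k = U g * (diag_sqrt (Lam g) * W g k)"
      using assms(6)[OF gk(1)] assms(8)[OF gk(1)] assms(12)[OF gk] by (rule chan_cluster_form)
    show "diag_sqrt (Lam g) * W g k \<in> carrier_mat (R g) L"
      by (rule mult_carrier_mat[OF diag_sqrt_carrier_mat[OF assms(8)[OF gk(1)]] assms(12)[OF gk]])
  qed
  show ?thesis
  proof (intro conjI impI ballI improved)
    assume "\<exists>A0 \<in> ?M. \<forall>A \<in> ?M. fobj G K (chan U Lam W) A0 \<le> fobj G K (chan U Lam W) A"
    then obtain A0 where "A0 \<in> ?M" and "\<forall>A \<in> ?M. fobj G K (chan U Lam W) A0 \<le> fobj G K (chan U Lam W) A"
      by blast
    with improved show "\<exists>C. (\<forall>g<G. C g \<in> carrier_mat (R g) L) \<and> (\<forall>A \<in> ?M.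
        fobj G K (chan U Lam W) (msum L Nr (\<lambda>g. cH (C g) * cH (U g)) G) \<le> fobj G K (chan U Lam W) A)"
      by (meson order.trans)
  qed
qed

end
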